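(* Let $k\geq 2$ be an integer, $n=rk$ with $r>2$ an integer, and $e=\lceil r/2\rceil-1$. Let $V_i=\{u+\eta_i u^q\gamma^{l_i}\mid u\in\mathbb{F}_{q^k}\}$, $i=1,\dots,e(q-1)$, where $\eta_i\in G$ and $1\le l_i\le e$. Then the code $\mathcal{C}=\bigcup_{i=1}^{e(q-1)}\{\alpha V_i\mid \alpha\in\mathbb{F}_{q^n}^*\}$ is a cyclic constant dimension subspace code with cardinality $e(q^n-1)$ and minimum distance $2k-2$.
   Context: $q$ is a prime power, $\mathbb{F}_{q^n}$ is the extension of degree $n$ of $\mathbb{F}_q$. The subspace distance is $d(U,V)=\dim U+\dim V-2\dim(U\cap V)$; a code is cyclic if it is a union of orbits $\{\alpha U\mid\alpha\in\mathbb{F}_{q^n}^*\}$. Let $\xi$ be a primitive element of $\mathbb{F}_{q^k}$ and $G=\mathbb{F}_{q^k}^*/\langle\xi^{q-1}\rangle$, a cyclic group of order $q-1$ (elements of $G$ used via fixed coset representatives in $\mathbb{F}_{q^k}^*$). Let $\gamma$ be a root of an irreducible polynomial of degree $r$ over $\mathbb{F}_{q^k}$. The $V_i$ are indexed by the $e(q-1)$ distinct pairs $(\eta_i,l_i)\in G\times\{1,\dots,e\}$. *)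

theory Defs
  imports "HOL-Computational_Algebra.Polynomial"
begin

definition is_subfield :: "'a::field set \<Rightarrow> bool" where
  "is_subfield K \<longleftrightarrow> 0 \<in> K \<and> 1 \<in> K \<and>
     (\<forall>x\<in>K. \<forall>y\<in>K. x + y \<in> K \<and> x * y \<in> K) \<and>
     (\<forall>x\<in>K. - x \<in> K \<and> inverse x \<in> K)"

definition is_subspace :: "'a::field set \<Rightarrow> 'a set \<Rightarrow> bool" where
  "is_subspace K U \<longleftrightarrow> 0 \<in> U \<and> (\<forall>x\<in>U. \<forall>y\<in>U. x + y \<in> U) \<and>
     (\<forall>c\<in>K. \<forall>x\<in>U. c * x \<in> U)"

definition lin_span :: "'a::field set \<Rightarrow> 'a set \<Rightarrow> 'a set" where
  "lin_span K S = {y. \<exists>c. (\<forall>s\<in>S. c s \<in> K) \<and> y = (\<Sum>s\<in>S. c s * s)}"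

definition subspace_dim :: "'a::field set \<Rightarrow> 'a set \<Rightarrow> nat" where
  "subspace_dim K U = (LEAST m. \<exists>B. finite B \<and> B \<subseteq> U \<and> card B = m \<and> lin_span K B = U)"

definition subspace_dist :: "'a::field set \<Rightarrow> 'a set \<Rightarrow> 'a set \<Rightarrow> nat" where
  "subspace_dist K U V = subspace_dim K U + subspace_dim K V - 2 * subspace_dim K (U \<inter> V)"

definition min_distance :: "'a::field set \<Rightarrow> 'a set set \<Rightarrow> nat" where
  "min_distance K C = Min {subspace_dist K U V | U V. U \<in> C \<and> V \<in> C \<and> U \<noteq> V}"

text \<open>A code is cyclic if it is a union of orbits {\<alpha> U | \<alpha> nonzero}, i.e. closed under
  multiplication by nonzero elements of the ambient field.\<close>
definition cyclic_code :: "'a::field set set \<Rightarrow> bool" where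
  "cyclic_code C \<longleftrightarrow> (\<forall>U\<in>C. \<forall>\<alpha>. \<alpha> \<noteq> 0 \<longrightarrow> (\<lambda>x. \<alpha> * x) ` U \<in> C)"

definition irreducible_over :: "'a::field set \<Rightarrow> 'a poly \<Rightarrow> bool" where
  "irreducible_over K p \<longleftrightarrow> degree p \<ge> 1 \<and> (\<forall>i. coeff p i \<in> K) \<and>
     (\<forall>f g. (\<forall>i. coeff f i \<in> K) \<longrightarrow> (\<forall>i. coeff g i \<in> K) \<longrightarrow> p = f * g \<longrightarrow>
        degree f = 0 \<or> degree g = 0)"

end

theory Submission
  imports Defs "HOL-Computational_Algebra.Primes" "HOL-Library.FuncSet" "HOL-Number_Theory.Cong"
begin

text \<open>Each \<open>V \<eta> l\<close> is the image of the injective \<open>F_q\<close>-linear map \<open>u \<mapsto> u + \<eta> u\<^sup>q \<gamma>\<^sup>l\<close> on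
  \<open>F_{q^k}\<close>, hence has dimension \<open>k\<close>. The key fact is that \<open>V \<eta> l\<close> and \<open>\<alpha> V \<eta>' l'\<close> share two
  \<open>F_q\<close>-independent vectors only if \<open>\<eta> = \<eta>'\<close>, \<open>l = l'\<close> and \<open>\<alpha> \<in> F_q\<close>: expanding the relation
  \<open>x\<^sub>1 y\<^sub>2 = x\<^sub>2 y\<^sub>1\<close> in the basis \<open>1, \<gamma>, \<dots>, \<gamma>\<^sup>r\<^sup>-\<^sup>1\<close> of \<open>F_{q^n}\<close> over \<open>F_{q^k}\<close> (possible as
  \<open>l + l' \<le> 2 e < r\<close>), the coefficients of \<open>1\<close> and \<open>\<gamma>\<^sup>l\<close> force \<open>l = l'\<close> and make \<open>\<eta>'/\<eta>\<close> a
  \<open>(q - 1)\<close>-th power, so \<open>\<eta> = \<eta>'\<close>. Hence distinct codewords meet in dimension at most one, which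
  gives the distance \<open>2k - 2\<close>, and the stabiliser of \<open>V \<eta> l\<close> among the scalars is \<open>F_q\<^sup>*\<close>, so each
  of the \<open>e (q - 1)\<close> orbits has \<open>(q\<^sup>n - 1)/(q - 1)\<close> elements.\<close>

section \<open>Subfields\<close>

lemma subfield_0: "is_subfield K \<Longrightarrow> 0 \<in> K"
  and subfield_1: "is_subfield K \<Longrightarrow> 1 \<in> K"
  and subfield_add: "is_subfield K \<Longrightarrow> x \<in> K \<Longrightarrow> y \<in> K \<Longrightarrow> x + y \<in> K"
  and subfield_mult: "is_subfield K \<Longrightarrow> x \<in> K \<Longrightarrow> y \<in> K \<Longrightarrow> x * y \<in> K"
  and subfield_uminus: "is_subfield K \<Longrightarrow> x \<in> K \<Longrightarrow> - x \<in> K"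
  and subfield_inverse: "is_subfield K \<Longrightarrow> x \<in> K \<Longrightarrow> inverse x \<in> K"
  by (simp_all add: is_subfield_def)

lemma subfield_diff: "is_subfield K \<Longrightarrow> x \<in> K \<Longrightarrow> y \<in> K \<Longrightarrow> x - y \<in> K"
  by (metis diff_conv_add_uminus subfield_add subfield_uminus)

lemma subfield_divide: "is_subfield K \<Longrightarrow> x \<in> K \<Longrightarrow> y \<in> K \<Longrightarrow> x / y \<in> K"
  by (simp add: divide_inverse subfield_inverse subfield_mult)

lemma subfield_power: "is_subfield K \<Longrightarrow> x \<in> K \<Longrightarrow> x ^ m \<in> K"
  by (induction m) (auto simp: subfield_1 subfield_mult)

lemma subfield_sum: "is_subfield K \<Longrightarrow> (\<And>i. i \<in> A \<Longrightarrow> f i \<in> K) \<Longrightarrow> sum f A \<in> K"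
  by (induction A rule: infinite_finite_induct) (auto simp: subfield_0 subfield_add)

lemma subfield_of_nat: "is_subfield K \<Longrightarrow> of_nat m \<in> K"
  by (induction m) (auto simp: subfield_0 subfield_1 subfield_add)

lemma subfield_UNIV: "is_subfield UNIV"
  by (simp add: is_subfield_def)

lemma card_subfield_ge_2:
  fixes K :: "'a::{field,finite} set"
  assumes "is_subfield K"
  shows "2 \<le> card K"
proof -
  have "card {0::'a, 1} \<le> card K"
    using assms by (intro card_mono) (auto simp: subfield_0 subfield_1)
  then show ?thesis by simp
qed

lemma power_card_subfield:
  fixes K :: "'a::{field,finite} set"
  assumes K: "is_subfield K" and c: "c \<in> K"
  shows "c ^ card K = c"
proof (cases "c = 0")
  case True
  then show ?thesis using card_subfield_ge_2[OF K] by simp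
next
  case False
  have "(\<Prod>y\<in>K - {0}. c * y) = (\<Prod>y\<in>K - {0}. y)"
    by (rule prod.reindex_bij_witness[of _ "\<lambda>y. y / c" "\<lambda>y. c * y"])
       (use False c K in \<open>auto simp: subfield_mult subfield_divide\<close>)
  then have "c ^ card (K - {0}) = 1"
    by (simp add: prod.distrib)
  moreover have "card K = Suc (card (K - {0}))"
    using subfield_0[OF K] card_subfield_ge_2[OF K] by simp
  ultimately show ?thesis by simp
qed

section \<open>Linear algebra over a subfield\<close>

lemma lin_span_memI: "\<forall>s\<in>B. c s \<in> K \<Longrightarrow> (\<Sum>s\<in>B. c s * s) \<in> lin_span K B"
  by (auto simp: lin_span_def)

lemma lin_span_base:
  assumes K: "is_subfield K" and B: "finite B" "b \<in> B"
  shows "b \<in> lin_span K B"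
proof -
  have "(\<Sum>s\<in>B. (if s = b then 1 else 0) * s) = (\<Sum>s\<in>B. if s = b then b else 0)"
    by (intro sum.cong) auto
  also have "\<dots> = b" using B by (simp add: sum.delta')
  finally have "(\<Sum>s\<in>B. (if s = b then 1 else 0) * s) = b" .
  moreover have "(\<Sum>s\<in>B. (if s = b then 1 else 0) * s) \<in> lin_span K B"
    by (rule lin_span_memI) (use K in \<open>simp add: subfield_0 subfield_1\<close>)
  ultimately show ?thesis by simp
qed

lemma lin_span_add:
  assumes K: "is_subfield K" and x: "x \<in> lin_span K B" and y: "y \<in> lin_span K B"
  shows "x + y \<in> lin_span K B"
proof -
  obtain c where c: "\<forall>s\<in>B. c s \<in> K" "x = (\<Sum>s\<in>B. c s * s)"
    using x by (auto simp: lin_span_def)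
  obtain d where d: "\<forall>s\<in>B. d s \<in> K" "y = (\<Sum>s\<in>B. d s * s)"
    using y by (auto simp: lin_span_def)
  have "x + y = (\<Sum>s\<in>B. (c s + d s) * s)"
    using c d by (simp add: sum.distrib distrib_right)
  moreover have "(\<Sum>s\<in>B. (c s + d s) * s) \<in> lin_span K B"
    using c d K by (intro lin_span_memI) (simp add: subfield_add)
  ultimately show ?thesis by simp
qed

lemma lin_span_smult:
  assumes K: "is_subfield K" and a: "a \<in> K" and x: "x \<in> lin_span K B"
  shows "a * x \<in> lin_span K B"
proof -
  obtain c where c: "\<forall>s\<in>B. c s \<in> K" "x = (\<Sum>s\<in>B. c s * s)"
    using x by (auto simp: lin_span_def)
  have "a * x = (\<Sum>s\<in>B. (a * c s) * s)"
    using c by (simp add: sum_distrib_left mult.assoc)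
  moreover have "(\<Sum>s\<in>B. (a * c s) * s) \<in> lin_span K B"
    using c a K by (intro lin_span_memI) (simp add: subfield_mult)
  ultimately show ?thesis by simp
qed

lemma lin_span_insert:
  assumes "finite B" "x \<notin> B" "a \<in> K" "s \<in> lin_span K B"
  shows "a * x + s \<in> lin_span K (insert x B)"
proof -
  obtain c where c: "\<forall>t\<in>B. c t \<in> K" "s = (\<Sum>t\<in>B. c t * t)"
    using assms by (auto simp: lin_span_def)
  have "(\<Sum>t\<in>insert x B. (c(x := a)) t * t) = a * x + (\<Sum>t\<in>B. (c(x := a)) t * t)"
    using assms by simp
  also have "(\<Sum>t\<in>B. (c(x := a)) t * t) = s"
    using assms c by (auto intro!: sum.cong)
  finally have "(\<Sum>t\<in>insert x B. (c(x := a)) t * t) = a * x + s" .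
  moreover have "(\<Sum>t\<in>insert x B. (c(x := a)) t * t) \<in> lin_span K (insert x B)"
    by (rule lin_span_memI) (use c assms in simp)
  ultimately show ?thesis by simp
qed

lemma lin_span_subset:
  assumes U: "is_subspace K U" and "finite B" "B \<subseteq> U"
  shows "lin_span K B \<subseteq> U"
proof
  fix y assume "y \<in> lin_span K B"
  then obtain c where c: "\<forall>s\<in>B. c s \<in> K" and y: "y = (\<Sum>s\<in>B. c s * s)"
    by (auto simp: lin_span_def)
  have "(\<Sum>s\<in>B'. c s * s) \<in> U" if "B' \<subseteq> B" for B'
    using finite_subset[OF that \<open>finite B\<close>] that
  proof (induction B' rule: finite_induct)
    case (insert x F)
    then have "c x * x \<in> U" using U c \<open>B \<subseteq> U\<close> by (auto simp: is_subspace_def)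
    with insert show ?case using U by (auto simp: is_subspace_def)
  qed (use U in \<open>simp add: is_subspace_def\<close>)
  then show "y \<in> U" using y by blast
qed

lemma card_lin_span_le:
  fixes K :: "'a::{field,finite} set"
  shows "card (lin_span K B) \<le> card K ^ card B"
proof -
  have "lin_span K B \<subseteq> (\<lambda>c. \<Sum>s\<in>B. c s * s) ` (B \<rightarrow>\<^sub>E K)"
  proof
    fix y assume "y \<in> lin_span K B"
    then obtain c where c: "\<forall>s\<in>B. c s \<in> K" and y: "y = (\<Sum>s\<in>B. c s * s)"
      by (auto simp: lin_span_def)
    have "restrict c B \<in> B \<rightarrow>\<^sub>E K" using c by auto
    moreover have "y = (\<Sum>s\<in>B. restrict c B s * s)" using y by simp
    ultimately show "y \<in> (\<lambda>c. \<Sum>s\<in>B. c s * s) ` (B \<rightarrow>\<^sub>E K)" by blast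
  qed
  then have "card (lin_span K B) \<le> card ((\<lambda>c. \<Sum>s\<in>B. c s * s) ` (B \<rightarrow>\<^sub>E K))"
    by (intro card_mono) auto
  also have "\<dots> \<le> card (B \<rightarrow>\<^sub>E K)" by (rule card_image_le) (simp add: finite_PiE)
  also have "\<dots> = card K ^ card B" by (simp add: card_PiE finite_subset[OF subset_UNIV])
  finally show ?thesis .
qed

lemma card_lin_span_insert:
  fixes K :: "'a::{field,finite} set"
  assumes K: "is_subfield K" and x: "x \<notin> lin_span K B"
  shows "card K * card (lin_span K B) \<le> card (lin_span K (insert x B))"
proof -
  have xB: "x \<notin> B" using x lin_span_base[OF K, of B x] by auto
  have "inj_on (\<lambda>(a, s). a * x + s) (K \<times> lin_span K B)"
  proof (rule inj_onI, clarsimp)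
    fix a s a' s'
    assume a: "a \<in> K" "a' \<in> K" and s: "s \<in> lin_span K B" "s' \<in> lin_span K B"
      and eq: "a * x + s = a' * x + s'"
    show "a = a' \<and> s = s'"
    proof (cases "a = a'")
      case True then show ?thesis using eq by simp
    next
      case False
      have "s' + (-1) * s \<in> lin_span K B"
        using s K by (intro lin_span_add lin_span_smult) (auto simp: subfield_uminus subfield_1)
      then have "inverse (a - a') * (s' + (-1) * s) \<in> lin_span K B"
        using K a by (intro lin_span_smult) (auto simp: subfield_inverse subfield_diff)
      moreover have "x = inverse (a - a') * (s' + (-1) * s)"
        using False eq by (simp add: field_simps)
      ultimately show ?thesis using x by simp
    qed
  qed
  then have "card K * card (lin_span K B) = card ((\<lambda>(a, s). a * x + s) ` (K \<times> lin_span K B))"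
    by (simp add: card_image card_cartesian_product)
  also have "\<dots> \<le> card (lin_span K (insert x B))"
    by (intro card_mono) (use lin_span_insert[of B x] xB in auto)
  finally show ?thesis .
qed

lemma subspace_basis_exists:
  fixes K :: "'a::{field,finite} set"
  assumes K: "is_subfield K" and U: "is_subspace K U"
  shows "\<exists>B. B \<subseteq> U \<and> lin_span K B = U \<and> card U = card K ^ card B"
proof -
  \<comment> \<open>The hypothesis on \<open>card (lin_span K B)\<close> says that \<open>B\<close> is linearly independent.\<close>
  have "\<exists>B. B \<subseteq> U \<and> lin_span K B = U \<and> card U = card K ^ card B"
    if "B \<subseteq> U" "card (lin_span K B) = card K ^ card B" for B
    using that
  proof (induction "card U - card (lin_span K B)" arbitrary: B rule: less_induct)
    case less
    have sub: "lin_span K B \<subseteq> U" by (rule lin_span_subset[OF U]) (use less in auto)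
    show ?case
    proof (cases "lin_span K B = U")
      case True then show ?thesis using less by auto
    next
      case False
      then obtain x where x: "x \<in> U" "x \<notin> lin_span K B" using sub by blast
      let ?B = "insert x B"
      have xB: "x \<notin> B" using x lin_span_base[OF K, of B x] by auto
      have "card K * card (lin_span K B) \<le> card (lin_span K ?B)"
        by (rule card_lin_span_insert[OF K x(2)])
      moreover have "card (lin_span K ?B) \<le> card K ^ card ?B" by (rule card_lin_span_le)
      ultimately have card_B': "card (lin_span K ?B) = card K ^ card ?B"
        using less.prems(2) xB by simp
      have sub': "lin_span K ?B \<subseteq> U" by (rule lin_span_subset[OF U]) (use less x in auto)
      have "lin_span K B \<subseteq> lin_span K ?B"
        using lin_span_insert[of B x 0 K] xB K by (auto simp: subfield_0)
      moreover have "x \<in> lin_span K ?B" using lin_span_base[OF K, of ?B x] by simp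
      ultimately have "card (lin_span K B) < card (lin_span K ?B)"
        using x by (intro psubset_card_mono) auto
      moreover have "card (lin_span K ?B) \<le> card U" by (intro card_mono sub') auto
      ultimately have "card U - card (lin_span K ?B) < card U - card (lin_span K B)"
        by linarith
      moreover have "?B \<subseteq> U" using less.prems(1) x(1) by simp
      ultimately show ?thesis using less.hyps card_B' by blast
    qed
  qed
  moreover have "card (lin_span K {}) = card K ^ card {}" by (simp add: lin_span_def)
  ultimately show ?thesis by blast
qed

lemma card_subspace_eq_power:
  fixes K :: "'a::{field,finite} set"
  assumes "is_subfield K" "is_subspace K U"
  obtains d where "card U = card K ^ d"
  using subspace_basis_exists[OF assms] by blast

lemma subspace_dim_eqI:
  fixes K :: "'a::{field,finite} set"
  assumes K: "is_subfield K" and U: "is_subspace K U" and card_U: "card U = card K ^ d"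
  shows "subspace_dim K U = d"
proof -
  obtain B where B: "B \<subseteq> U" "lin_span K B = U" "card U = card K ^ card B"
    using subspace_basis_exists[OF K U] by blast
  have K2: "2 \<le> card K" by (rule card_subfield_ge_2[OF K])
  then have "card B = d" using B card_U by simp
  show ?thesis unfolding subspace_dim_def
  proof (rule Least_equality)
    show "\<exists>B. finite B \<and> B \<subseteq> U \<and> card B = d \<and> lin_span K B = U"
      using B \<open>card B = d\<close> by auto
  next
    fix m assume "\<exists>B. finite B \<and> B \<subseteq> U \<and> card B = m \<and> lin_span K B = U"
    then have "card K ^ d \<le> card K ^ m" using card_lin_span_le card_U by metis
    then show "d \<le> m" using K2 by (simp add: power_le_imp_le_exp)
  qed
qed

lemma subspace_Int: "is_subspace K U \<Longrightarrow> is_subspace K W \<Longrightarrow> is_subspace K (U \<inter> W)"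
  by (auto simp: is_subspace_def)

lemma subspace_scale:
  assumes U: "is_subspace K U"
  shows "is_subspace K ((\<lambda>x. \<alpha> * x) ` U)"
  unfolding is_subspace_def
proof (intro conjI ballI)
  show "0 \<in> (\<lambda>x. \<alpha> * x) ` U" using U by (force simp: is_subspace_def)
next
  fix x y assume "x \<in> (\<lambda>x. \<alpha> * x) ` U" "y \<in> (\<lambda>x. \<alpha> * x) ` U"
  then obtain a b where "a \<in> U" "b \<in> U" "x = \<alpha> * a" "y = \<alpha> * b" by blast
  moreover have "\<alpha> * a + \<alpha> * b = \<alpha> * (a + b)" by (simp add: distrib_left)
  moreover have "a + b \<in> U" using U \<open>a \<in> U\<close> \<open>b \<in> U\<close> by (simp add: is_subspace_def)
  ultimately show "x + y \<in> (\<lambda>x. \<alpha> * x) ` U" by auto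
next
  fix c x assume "c \<in> K" "x \<in> (\<lambda>x. \<alpha> * x) ` U"
  then obtain a where "a \<in> U" "x = \<alpha> * a" by blast
  moreover have "c * (\<alpha> * a) = \<alpha> * (c * a)" by (simp add: mult.left_commute)
  moreover have "c * a \<in> U" using U \<open>c \<in> K\<close> \<open>a \<in> U\<close> by (simp add: is_subspace_def)
  ultimately show "c * x \<in> (\<lambda>x. \<alpha> * x) ` U" by auto
qed

section \<open>Finite fields: prime subfield and Frobenius\<close>

lemma prime_subfield: "is_subfield (range (of_nat :: nat \<Rightarrow> 'a::{field,finite}))"
proof -
  let ?P = "range (of_nat :: nat \<Rightarrow> 'a)"
  have mult: "x * y \<in> ?P" if "x \<in> ?P" "y \<in> ?P" for x y
    using that by (auto simp flip: of_nat_mult)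
  have power: "x ^ m \<in> ?P" if "x \<in> ?P" for x m
    using that by (auto simp flip: of_nat_power)
  have "CHAR('a) > 0" by (rule finite_imp_CHAR_pos) simp
  then have "of_nat (CHAR('a) - 1) + 1 = (of_nat CHAR('a) :: 'a)"
    by (simp add: of_nat_diff)
  then have "of_nat (CHAR('a) - 1) = (- 1 :: 'a)"
    by (simp add: eq_neg_iff_add_eq_0)
  then have "- x = of_nat (CHAR('a) - 1) * x" for x :: 'a
    by simp
  then have uminus: "- x \<in> ?P" if "x \<in> ?P" for x
    using that mult by (metis rangeI)
  have inverse: "inverse x \<in> ?P" if "x \<in> ?P" for x
  proof (cases "x = 0")
    case False
    let ?N = "card (UNIV :: 'a set)"
    have "x ^ ?N = x" using power_card_subfield[of "UNIV :: 'a set"] subfield_UNIV by simp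
    moreover have "2 \<le> ?N" using card_subfield_ge_2 subfield_UNIV by blast
    then have "Suc (Suc (?N - 2)) = ?N" by arith
    ultimately have "x * (x * x ^ (?N - 2)) = x * 1" by (metis power_Suc mult_1_right)
    then have "inverse x = x ^ (?N - 2)" using False by (simp add: inverse_unique)
    then show ?thesis using power[OF that] by simp
  qed (use that in \<open>metis inverse_zero\<close>)
  have add: "x + y \<in> ?P" if "x \<in> ?P" "y \<in> ?P" for x y
    using that by (auto simp flip: of_nat_add)
  have "0 \<in> ?P" "1 \<in> ?P"
    by (rule image_eqI[where x = 0], simp_all, rule image_eqI[where x = 1], simp_all)
  with add mult uminus inverse show ?thesis unfolding is_subfield_def by simp
qed

lemma card_prime_subfield: "card (range (of_nat :: nat \<Rightarrow> 'a::{field,finite})) = CHAR('a)"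
proof -
  have CHAR_pos: "CHAR('a) > 0" by (rule finite_imp_CHAR_pos) simp
  have of_nat_mod: "(of_nat (m mod CHAR('a)) :: 'a) = of_nat m" for m
    by (simp add: of_nat_eq_iff_cong_CHAR cong_def)
  have "range (of_nat :: nat \<Rightarrow> 'a) = of_nat ` {..<CHAR('a)}"
  proof (intro equalityI subsetI)
    fix y assume "y \<in> range (of_nat :: nat \<Rightarrow> 'a)"
    then obtain m where "y = of_nat (m mod CHAR('a))" using of_nat_mod by auto
    then show "y \<in> of_nat ` {..<CHAR('a)}" using CHAR_pos by auto
  qed auto
  moreover have "inj_on (of_nat :: nat \<Rightarrow> 'a) {..<CHAR('a)}"
    by (auto intro!: inj_onI simp: of_nat_eq_iff_cong_CHAR cong_def)
  ultimately show ?thesis by (simp add: card_image)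
qed

lemma card_subfield_CHAR_power:
  fixes K :: "'a::{field,finite} set"
  assumes K: "is_subfield K"
  obtains d where "card K = CHAR('a) ^ d"
proof -
  have "is_subspace (range of_nat) K"
    using K by (auto simp: is_subspace_def subfield_0 subfield_add subfield_mult subfield_of_nat)
  then show ?thesis
    using that card_subspace_eq_power[OF prime_subfield] by (metis card_prime_subfield)
qed

lemma power_card_subfield_add:
  fixes K :: "'a::{field,finite} set" and x y :: 'a
  assumes "is_subfield K"
  shows "(x + y) ^ card K = x ^ card K + y ^ card K"
proof -
  have "CHAR('a) > 0" by (rule finite_imp_CHAR_pos) simp
  then have "prime CHAR('a)" by (rule prime_CHAR_semidom)
  moreover obtain d where "card K = CHAR('a) ^ d" using card_subfield_CHAR_power[OF assms] .
  ultimately show ?thesis by (rule freshmans_dream')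
qed

lemma mem_subfield_iff_power_card:
  fixes K :: "'a::{field,finite} set"
  assumes K: "is_subfield K"
  shows "t \<in> K \<longleftrightarrow> t ^ card K = t"
proof -
  let ?q = "card K"
  let ?f = "monom (1::'a) ?q + [:0, -1:]"
  have q2: "2 \<le> ?q" by (rule card_subfield_ge_2[OF K])
  then have "degree ?f = ?q" by (subst degree_add_eq_left) (auto simp: degree_monom_eq)
  with q2 have "?f \<noteq> 0" by auto
  moreover have roots: "{x. poly ?f x = 0} = {x. x ^ ?q = x}" by (auto simp: poly_monom)
  ultimately have "card {x::'a. x ^ ?q = x} \<le> ?q"
    using card_poly_roots_bound \<open>degree ?f = ?q\<close> by metis
  moreover have "K \<subseteq> {x. x ^ ?q = x}" using power_card_subfield[OF K] by auto
  ultimately have "K = {x. x ^ ?q = x}" by (intro card_subset_eq) (auto intro!: le_antisym card_mono)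
  then show ?thesis by auto
qed

lemma power_card_minus_1_eq_1_iff:
  fixes K :: "'a::{field,finite} set"
  assumes "is_subfield K" "c \<noteq> 0"
  shows "c ^ (card K - 1) = 1 \<longleftrightarrow> c \<in> K"
proof -
  have "card K = Suc (card K - 1)" using card_subfield_ge_2[OF assms(1)] by simp
  then have "c ^ card K = c * c ^ (card K - 1)" by (metis power_Suc)
  then show ?thesis using mem_subfield_iff_power_card[OF assms(1)] assms(2) by auto
qed

lemma card_eq_card_image_mult_fibre:
  assumes "finite A" and fibre: "\<And>x. x \<in> A \<Longrightarrow> card {y \<in> A. f y = f x} = m"
  shows "card A = card (f ` A) * m"
proof -
  have "card A = card (\<Union>z \<in> f ` A. {y \<in> A. f y = z})"
    by (rule arg_cong[where f = card]) blast
  also have "\<dots> = (\<Sum>z \<in> f ` A. card {y \<in> A. f y = z})"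
    by (rule card_UN_disjoint) (use \<open>finite A\<close> in auto)
  also have "\<dots> = (\<Sum>z \<in> f ` A. m)" using fibre by (intro sum.cong) auto
  finally show ?thesis by simp
qed

lemma card_units_eq_card_powers_mult:
  fixes Fq Fk :: "'a::{field,finite} set"
  assumes Fq: "is_subfield Fq" and Fk: "is_subfield Fk" "Fq \<subseteq> Fk"
  shows "card (Fk - {0}) = card ((\<lambda>w. w ^ (card Fq - 1)) ` (Fk - {0})) * (card Fq - 1)"
proof (rule card_eq_card_image_mult_fibre)
  let ?q = "card Fq"
  note power_eq_1_iff = power_card_minus_1_eq_1_iff[OF Fq]
  fix w assume w: "w \<in> Fk - {0}"
  have "{w' \<in> Fk - {0}. w' ^ (?q - 1) = w ^ (?q - 1)} = (\<lambda>c. c * w) ` (Fq - {0})"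
  proof (intro equalityI subsetI)
    fix w' assume "w' \<in> {w' \<in> Fk - {0}. w' ^ (?q - 1) = w ^ (?q - 1)}"
    then have "w' / w \<in> Fq - {0}" "w' = (w' / w) * w"
      using w power_eq_1_iff[of "w' / w"] by (auto simp: power_divide)
    then show "w' \<in> (\<lambda>c. c * w) ` (Fq - {0})" by blast
  next
    fix w' assume "w' \<in> (\<lambda>c. c * w) ` (Fq - {0})"
    then obtain c where "c \<in> Fq - {0}" "w' = c * w" by blast
    then show "w' \<in> {w' \<in> Fk - {0}. w' ^ (?q - 1) = w ^ (?q - 1)}"
      using w Fk power_eq_1_iff[of c] by (auto simp: power_mult_distrib subfield_mult)
  qed
  moreover have "inj_on (\<lambda>c. c * w) (Fq - {0})" using w by (auto intro: inj_onI)
  ultimately show "card {w' \<in> Fk - {0}. w' ^ (?q - 1) = w ^ (?q - 1)} = ?q - 1"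
    using subfield_0[OF Fq] by (simp add: card_image)
qed simp

section \<open>Polynomials over a subfield\<close>

definition poly_over :: "'a::field set \<Rightarrow> 'a poly \<Rightarrow> bool" where
  "poly_over K f \<longleftrightarrow> (\<forall>i. coeff f i \<in> K)"

lemma poly_over_0: "is_subfield K \<Longrightarrow> poly_over K 0"
  and poly_over_add: "is_subfield K \<Longrightarrow> poly_over K f \<Longrightarrow> poly_over K g \<Longrightarrow> poly_over K (f + g)"
  and poly_over_diff: "is_subfield K \<Longrightarrow> poly_over K f \<Longrightarrow> poly_over K g \<Longrightarrow> poly_over K (f - g)"
  and poly_over_monom: "is_subfield K \<Longrightarrow> c \<in> K \<Longrightarrow> poly_over K (monom c n)"
  by (simp_all add: poly_over_def subfield_0 subfield_add subfield_diff coeff_monom)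

lemma poly_over_mult: "is_subfield K \<Longrightarrow> poly_over K f \<Longrightarrow> poly_over K g \<Longrightarrow> poly_over K (f * g)"
  unfolding poly_over_def coeff_mult by (auto intro!: subfield_sum subfield_mult)

lemma poly_over_div_mod:
  assumes K: "is_subfield K" and f: "poly_over K f" "f \<noteq> 0" and g: "poly_over K g"
  shows "\<exists>s t. g = f * s + t \<and> poly_over K s \<and> poly_over K t \<and> (t = 0 \<or> degree t < degree f)"
  using g
proof (induction "degree g" arbitrary: g rule: less_induct)
  case less
  show ?case
  proof (cases "g = 0 \<or> degree g < degree f")
    case True
    then show ?thesis using less.prems K by (intro exI[of _ 0] exI[of _ g]) (auto simp: poly_over_0)
  next
    case False
    then have g0: "g \<noteq> 0" and dg: "degree f \<le> degree g" by auto
    define c where "c = lead_coeff g / lead_coeff f"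
    define d where "d = degree g - degree f"
    define h where "h = g - monom c d * f"
    have c: "c \<in> K"
      unfolding c_def using less.prems f K by (auto simp: poly_over_def intro!: subfield_divide)
    have h: "poly_over K h"
      unfolding h_def using K less.prems f c by (intro poly_over_diff poly_over_mult poly_over_monom)
    have "degree (monom c d * f) \<le> degree g"
      using degree_mult_le[of "monom c d" f] degree_monom_le[of c d] dg unfolding d_def by linarith
    then have "degree h \<le> degree g" unfolding h_def by (intro degree_diff_le) auto
    moreover have "coeff h (degree g) = 0"
      unfolding h_def c_def d_def using dg f by (simp add: coeff_monom_mult)
    ultimately have "h = 0 \<or> degree h < degree g"
      using g0 by (metis le_neq_implies_less leading_coeff_0_iff)
    then obtain s t where st: "h = f * s + t" "poly_over K s" "poly_over K t" "t = 0 \<or> degree t < degree f"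
      using less.hyps[OF _ h] K by (metis add.right_neutral mult_zero_right poly_over_0)
    have "g = f * (s + monom c d) + t"
      using st(1) unfolding h_def by (simp add: algebra_simps)
    then show ?thesis using st K c by (blast intro: poly_over_add poly_over_monom)
  qed
qed

locale root_of_irreducible =
  fixes K :: "'a::{field,finite} set" and p :: "'a poly" and \<gamma> :: 'a and r :: nat
  assumes subfield: "is_subfield K"
    and irreducible: "irreducible_over K p" and degree: "degree p = r" and root: "poly p \<gamma> = 0"
begin

lemma degree_pos: "0 < r"
  using irreducible degree by (simp add: irreducible_over_def)

lemma no_root_of_smaller_degree:
  assumes "poly_over K g" "poly g \<gamma> = 0" "degree g < r"
  shows "g = 0"
proof (rule ccontr)
  let ?S = "\<lambda>g. g \<noteq> 0 \<and> poly_over K g \<and> poly g \<gamma> = 0 \<and> degree g < r"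
  assume "g \<noteq> 0"
  then obtain g0 where g0: "?S g0" and min: "\<And>h. ?S h \<Longrightarrow> degree g0 \<le> degree h"
    using ex_has_least_nat[of ?S g degree] assms by blast
  have p: "poly_over K p" using irreducible by (simp add: irreducible_over_def poly_over_def)
  obtain s t where st: "p = g0 * s + t" "poly_over K s" "poly_over K t" "t = 0 \<or> degree t < degree g0"
    using poly_over_div_mod[OF subfield _ _ p] g0 by blast
  have "poly t \<gamma> = 0" using st(1) root g0 by simp
  then have "t = 0" using st(3,4) g0 min by (meson less_trans not_le)
  then have "p = g0 * s" using st(1) by simp
  then have "degree g0 = 0 \<or> degree s = 0"
    using irreducible g0 st(2) by (simp add: irreducible_over_def poly_over_def)
  moreover have "degree g0 \<noteq> 0"
  proof
    assume "degree g0 = 0"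
    then obtain a where "g0 = [:a:]" by (rule degree_eq_zeroE)
    then show False using g0 by auto
  qed
  moreover have "s \<noteq> 0" using \<open>p = g0 * s\<close> degree degree_pos by auto
  ultimately show False
    using \<open>p = g0 * s\<close> g0 degree by (auto simp: degree_mult_eq)
qed

lemma powers_independent:
  assumes c: "\<forall>i<r. c i \<in> K" and sum: "(\<Sum>i<r. c i * \<gamma> ^ i) = 0" and i: "i < r"
  shows "c i = 0"
proof -
  define f where "f = (\<Sum>i<r. monom (c i) i)"
  have coeff_f: "coeff f j = (if j < r then c j else 0)" for j
    unfolding f_def coeff_sum by (simp add: coeff_monom)
  have "poly_over K f" using c subfield by (auto simp: poly_over_def coeff_f subfield_0)
  moreover have "poly f \<gamma> = 0" using sum by (simp add: f_def poly_sum poly_monom)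
  moreover have "degree f \<le> r - 1" by (rule degree_le) (auto simp: coeff_f)
  then have "degree f < r" using degree_pos by linarith
  ultimately have "f = 0" by (rule no_root_of_smaller_degree)
  then show ?thesis using coeff_f[of i] i by simp
qed

lemma power_relation_coeff_eq_0:
  assumes ts: "\<forall>(c, d) \<in> set ts. c \<in> K \<and> d < r" and rel: "(\<Sum>(c, d) \<leftarrow> ts. c * \<gamma> ^ d) = 0"
  shows "(\<Sum>(c, d) \<leftarrow> ts. if d = j then c else 0) = 0"
proof -
  define a where "a i = (\<Sum>(c, d) \<leftarrow> ts. if d = i then c else 0)" for i
  have "(\<Sum>(c, d) \<leftarrow> ts. c * \<gamma> ^ d) = (\<Sum>i<r. a i * \<gamma> ^ i)"
    using ts unfolding a_def
    by (induction ts) (auto simp: distrib_right sum.distrib if_distrib if_distribR sum.delta cong: if_cong)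
  moreover have "a i \<in> K" for i
    using ts unfolding a_def by (induction ts) (auto simp: subfield_add[OF subfield] subfield_0[OF subfield])
  ultimately have "a j = 0" if "j < r" using rel that powers_independent by simp
  moreover have "a j = 0" if "r \<le> j"
    using ts that unfolding a_def by (induction ts) auto
  ultimately show ?thesis unfolding a_def by fastforce
qed

end

section \<open>The orbit code\<close>

lemma nat_ceiling_half_minus_1:
  assumes "2 < r"
  shows "1 \<le> nat \<lceil>real r / 2\<rceil> - 1" and "2 * (nat \<lceil>real r / 2\<rceil> - 1) < r"
proof -
  have lower: "real r / 2 \<le> real_of_int \<lceil>real r / 2\<rceil>" by (rule le_of_int_ceiling)
  have upper: "real_of_int \<lceil>real r / 2\<rceil> < real r / 2 + 1" by linarith
  from lower assms have "2 \<le> \<lceil>real r / 2\<rceil>" by linarith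
  then show "1 \<le> nat \<lceil>real r / 2\<rceil> - 1" by linarith
  from upper have "2 * \<lceil>real r / 2\<rceil> < int r + 2" by linarith
  then show "2 * (nat \<lceil>real r / 2\<rceil> - 1) < r" using \<open>2 \<le> \<lceil>real r / 2\<rceil>\<close> by linarith
qed

lemma image_mult_subfield:
  assumes "is_subfield K" "c \<in> K" "c \<noteq> 0"
  shows "(\<lambda>u. c * u) ` K = K"
proof
  show "(\<lambda>u. c * u) ` K \<subseteq> K" using assms by (auto intro: subfield_mult)
  show "K \<subseteq> (\<lambda>u. c * u) ` K"
  proof
    fix u assume "u \<in> K"
    then have "u / c \<in> K" "u = c * (u / c)" using assms by (auto intro: subfield_divide)
    then show "u \<in> (\<lambda>u. c * u) ` K" by blast
  qed
qed

lemma generator_powers_eq_image_power: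
  fixes K :: "'a::{field,finite} set"
  assumes K: "is_subfield K" and card_K: "2 < card K"
    and \<xi>: "\<xi> \<in> K" "\<forall>x\<in>K - {0}. \<exists>j::nat. x = \<xi> ^ j"
  shows "{\<xi> ^ (m * j) | j. True} = (\<lambda>w. w ^ m) ` (K - {0})"
proof -
  have "\<xi> \<noteq> 0"
  proof
    assume "\<xi> = 0"
    then have "K \<subseteq> {0, 1}" using \<xi>(2) by (auto simp: power_0_left split: if_splits)
    then show False using card_K card_mono[of "{0, 1}" K] by simp
  qed
  then have in_K: "\<xi> ^ j \<in> K - {0}" for j using K \<xi>(1) by (simp add: subfield_power)
  have pow: "\<xi> ^ (m * j) = (\<xi> ^ j) ^ m" for j by (simp add: power_mult[symmetric] mult.commute)
  show ?thesis
  proof (intro equalityI subsetI)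
    fix x assume "x \<in> {\<xi> ^ (m * j) | j. True}"
    then show "x \<in> (\<lambda>w. w ^ m) ` (K - {0})" using in_K pow by auto
  next
    fix x assume "x \<in> (\<lambda>w. w ^ m) ` (K - {0})"
    then obtain w where "w \<in> K - {0}" "x = w ^ m" by blast
    moreover obtain j where "w = \<xi> ^ j" using \<xi>(2) \<open>w \<in> K - {0}\<close> by blast
    ultimately have "x = (\<xi> ^ j) ^ m" by simp
    then show "x \<in> {\<xi> ^ (m * j) | j. True}" using pow by auto
  qed
qed

locale orbit_code =
  fixes Fq Fk :: "'a::{field,finite} set"
    and q k r n e :: nat
    and \<xi> \<gamma> :: 'a
    and p :: "'a poly"
    and R :: "'a set"
    and V :: "'a \<Rightarrow> nat \<Rightarrow> 'a set"
    and C :: "'a set set"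
  assumes Fq: "is_subfield Fq" "card Fq = q"
    and Fk: "is_subfield Fk" "Fq \<subseteq> Fk" "card Fk = q ^ k"
    and ambient: "card (UNIV :: 'a set) = q ^ n"
    and k: "k \<ge> 2" and r: "r > 2"
    and e: "e = nat \<lceil>real r / 2\<rceil> - 1"
    and xi: "\<xi> \<in> Fk" "\<forall>x\<in>Fk - {0}. \<exists>j::nat. x = \<xi> ^ j"
    and gamma: "irreducible_over Fk p" "degree p = r" "poly p \<gamma> = 0"
    and R: "R \<subseteq> Fk - {0}"
      "\<forall>x\<in>Fk - {0}. \<exists>!\<eta>. \<eta> \<in> R \<and> x * inverse \<eta> \<in> {\<xi> ^ ((q - 1) * j) | j. True}"
    and V_def: "\<And>\<eta> l. V \<eta> l = {u + \<eta> * u ^ q * \<gamma> ^ l | u. u \<in> Fk}"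
    and C_def: "C = (\<Union>(\<eta>, l) \<in> R \<times> {1..e}. {(\<lambda>x. \<alpha> * x) ` V \<eta> l | \<alpha>. \<alpha> \<noteq> 0})"
begin

sublocale root_of_irreducible Fk p \<gamma> r
  using Fk gamma by unfold_locales

lemmas Fk_closed = subfield_0[OF Fk(1)] subfield_1[OF Fk(1)] subfield_add[OF Fk(1)]
  subfield_mult[OF Fk(1)] subfield_diff[OF Fk(1)] subfield_divide[OF Fk(1)] subfield_power[OF Fk(1)]

lemma q_ge_2: "2 \<le> q"
  using card_subfield_ge_2[OF Fq(1)] Fq(2) by simp

lemma q_less: "q < q ^ k"
proof -
  have "q < q ^ 2" using q_ge_2 by (simp add: power2_eq_square)
  also have "\<dots> \<le> q ^ k" using k q_ge_2 by (intro power_increasing) auto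
  finally show ?thesis .
qed

lemma e_ge_1: "1 \<le> e" and double_e_less: "2 * e < r"
  using nat_ceiling_half_minus_1[OF r] e by simp_all

lemma exponent_bounds: "l \<in> {1..e} \<Longrightarrow> 0 < l \<and> l < r"
  using double_e_less by auto

lemma frobenius_add: "(x + y :: 'a) ^ q = x ^ q + y ^ q"
  using power_card_subfield_add[OF Fq(1)] Fq(2) by simp

lemma mem_Fq_iff: "t \<in> Fq \<longleftrightarrow> t ^ q = t"
  using mem_subfield_iff_power_card[OF Fq(1)] Fq(2) by simp

lemma power_q: "(x :: 'a) ^ q = x * x ^ (q - 1)"
  using q_ge_2 by (simp add: power_eq_if)

lemma power_q_minus_1_eq_1_iff: "t \<noteq> 0 \<Longrightarrow> t ^ (q - 1) = 1 \<longleftrightarrow> t \<in> Fq"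
  using power_card_minus_1_eq_1_iff[OF Fq(1)] Fq(2) by simp

lemma R_memD: "\<eta> \<in> R \<Longrightarrow> \<eta> \<in> Fk \<and> \<eta> \<noteq> 0"
  using R(1) by auto

text \<open>As \<open>\<xi>\<close> generates the units of \<open>Fk\<close>, the subgroup generated by \<open>\<xi>\<^sup>q\<^sup>-\<^sup>1\<close> is the group of
  \<open>(q - 1)\<close>-th powers, and \<open>R\<close> is a transversal of its cosets, the group \<open>G\<close> of the paper.\<close>

lemma R_transversal:
  "\<forall>x\<in>Fk - {0}. \<exists>!\<eta>. \<eta> \<in> R \<and> x * inverse \<eta> \<in> (\<lambda>w. w ^ (q - 1)) ` (Fk - {0})"
proof -
  have "2 < card Fk" using q_less q_ge_2 Fk(3) by linarith
  note powers = generator_powers_eq_image_power[OF Fk(1) this xi]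
  from R(2) show ?thesis unfolding powers .
qed

lemma R_eq_if_ratio_power:
  assumes "\<eta> \<in> R" "\<eta>' \<in> R" "w \<in> Fk - {0}" "\<eta>' = \<eta> * w ^ (q - 1)"
  shows "\<eta>' = \<eta>"
proof -
  have "\<eta>' \<in> Fk - {0}" using assms R_memD by auto
  moreover have "\<eta>' * inverse \<eta> = w ^ (q - 1)" using assms R_memD by simp
  then have "\<eta>' * inverse \<eta> \<in> (\<lambda>w. w ^ (q - 1)) ` (Fk - {0})" using assms(3) by blast
  moreover have "\<eta>' * inverse \<eta>' \<in> (\<lambda>w. w ^ (q - 1)) ` (Fk - {0})"
    using \<open>\<eta>' \<in> Fk - {0}\<close> Fk_closed(2) by (intro image_eqI[where x = 1]) auto
  ultimately show ?thesis using R_transversal assms(1,2) by blast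
qed

lemma card_R_mult_card_powers: "card R * card ((\<lambda>w. w ^ (q - 1)) ` (Fk - {0})) = card (Fk - {0})"
proof -
  define H where "H = (\<lambda>w. w ^ (q - 1)) ` (Fk - {0})"
  have "bij_betw (\<lambda>(\<eta>, h). \<eta> * h) (R \<times> H) (Fk - {0})"
  proof (rule bij_betw_imageI)
    show "inj_on (\<lambda>(\<eta>, h). \<eta> * h) (R \<times> H)"
    proof (rule inj_onI, clarify)
      fix \<eta> h \<eta>' h' assume "\<eta> \<in> R" "h \<in> H" "\<eta>' \<in> R" "h' \<in> H" and eq: "\<eta> * h = \<eta>' * h'"
      moreover from this have "\<eta> * h \<in> Fk - {0}" using R_memD by (auto simp: H_def Fk_closed)
      moreover have "\<eta> * h * inverse \<eta> = h" "\<eta>' * h' * inverse \<eta>' = h'"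
        using R_memD \<open>\<eta> \<in> R\<close> \<open>\<eta>' \<in> R\<close> by simp_all
      ultimately have "\<eta> = \<eta>'" using R_transversal unfolding H_def by (metis (no_types, lifting))
      then show "\<eta> = \<eta>' \<and> h = h'" using eq R_memD \<open>\<eta> \<in> R\<close> by simp
    qed
    show "(\<lambda>(\<eta>, h). \<eta> * h) ` (R \<times> H) = Fk - {0}"
    proof
      show "(\<lambda>(\<eta>, h). \<eta> * h) ` (R \<times> H) \<subseteq> Fk - {0}" using R_memD by (auto simp: H_def Fk_closed)
      show "Fk - {0} \<subseteq> (\<lambda>(\<eta>, h). \<eta> * h) ` (R \<times> H)"
      proof
        fix x assume "x \<in> Fk - {0}"
        then obtain \<eta> where "\<eta> \<in> R" "x * inverse \<eta> \<in> H" using R_transversal unfolding H_def by blast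
        moreover have "x = \<eta> * (x * inverse \<eta>)" using R_memD \<open>\<eta> \<in> R\<close> by simp
        ultimately show "x \<in> (\<lambda>(\<eta>, h). \<eta> * h) ` (R \<times> H)" by force
      qed
    qed
  qed
  then show ?thesis unfolding H_def by (metis bij_betw_same_card card_cartesian_product)
qed

lemma card_R: "card R = q - 1"
proof -
  let ?H = "(\<lambda>w. w ^ (q - 1)) ` (Fk - {0})"
  have "card (Fk - {0}) = card ?H * (q - 1)"
    using card_units_eq_card_powers_mult[OF Fq(1) Fk(1,2)] Fq(2) by simp
  moreover have "card ?H > 0" using Fk_closed(2) by (auto simp: card_gt_0_iff)
  ultimately show ?thesis using card_R_mult_card_powers by (metis mult.commute mult_left_cancel neq0_conv)
qed

definition emb :: "'a \<Rightarrow> nat \<Rightarrow> 'a \<Rightarrow> 'a" where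
  "emb \<eta> l u = u + \<eta> * u ^ q * \<gamma> ^ l"

lemma V_eq_image_emb: "V \<eta> l = emb \<eta> l ` Fk"
  unfolding V_def emb_def by auto

lemma emb_0: "emb \<eta> l 0 = 0"
  using q_ge_2 by (simp add: emb_def)

lemma emb_add: "emb \<eta> l (u + u') = emb \<eta> l u + emb \<eta> l u'"
  by (simp add: emb_def frobenius_add algebra_simps)

lemma emb_smult: "c \<in> Fq \<Longrightarrow> emb \<eta> l (c * u) = c * emb \<eta> l u"
  using mem_Fq_iff[of c] by (simp add: emb_def power_mult_distrib algebra_simps)

lemma inj_on_emb:
  assumes "\<eta> \<in> Fk" "0 < l" "l < r"
  shows "inj_on (emb \<eta> l) Fk"
proof (rule inj_onI)
  fix u u' assume u: "u \<in> Fk" "u' \<in> Fk" and "emb \<eta> l u = emb \<eta> l u'"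
  then have "(\<Sum>(c, d) \<leftarrow> [(u - u', 0), (\<eta> * (u ^ q - u' ^ q), l)]. c * \<gamma> ^ d) = 0"
    by (simp add: emb_def algebra_simps)
  then have "(\<Sum>(c, d) \<leftarrow> [(u - u', 0), (\<eta> * (u ^ q - u' ^ q), l)]. if d = 0 then c else 0) = 0"
    using u assms by (intro power_relation_coeff_eq_0) (auto simp: Fk_closed)
  then show "u = u'" using assms(2) by simp
qed

lemma emb_eq_0_iff:
  assumes "\<eta> \<in> Fk" "0 < l \<and> l < r" "u \<in> Fk"
  shows "emb \<eta> l u = 0 \<longleftrightarrow> u = 0"
  using inj_onD[OF inj_on_emb, of \<eta> l u 0] assms emb_0 Fk_closed(1) by auto

lemma card_V:
  assumes "\<eta> \<in> R" "l \<in> {1..e}"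
  shows "card (V \<eta> l) = q ^ k"
  using card_image[OF inj_on_emb] R_memD exponent_bounds assms Fk(3) by (simp add: V_eq_image_emb)

lemma subspace_V: "is_subspace Fq (V \<eta> l)"
  unfolding is_subspace_def V_eq_image_emb
proof (intro conjI ballI)
  show "0 \<in> emb \<eta> l ` Fk" using emb_0 Fk_closed(1) by (metis image_eqI)
next
  fix x y assume "x \<in> emb \<eta> l ` Fk" "y \<in> emb \<eta> l ` Fk"
  then obtain u u' where "u \<in> Fk" "u' \<in> Fk" "x = emb \<eta> l u" "y = emb \<eta> l u'" by blast
  then show "x + y \<in> emb \<eta> l ` Fk" by (metis emb_add image_eqI Fk_closed(3))
next
  fix c x assume c: "c \<in> Fq" and "x \<in> emb \<eta> l ` Fk"
  then obtain u where "u \<in> Fk" "x = emb \<eta> l u" by blast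
  moreover have "c * u \<in> Fk" using calculation c Fk(2) Fk_closed(4) by blast
  ultimately show "c * x \<in> emb \<eta> l ` Fk" using emb_smult[OF c] by (metis image_eqI)
qed

text \<open>This is where \<open>2 e < r\<close> enters: it keeps the exponent \<open>l + l'\<close> of the cross term below \<open>r\<close>.\<close>

lemma emb_cross_relation:
  assumes Fk_elems: "u1 \<in> Fk" "u2 \<in> Fk" "v1 \<in> Fk" "v2 \<in> Fk" "\<eta> \<in> Fk" "\<eta>' \<in> Fk"
    and l: "0 < l" "0 < l'" "l + l' < r"
    and cross: "emb \<eta> l u1 * emb \<eta>' l' v2 = emb \<eta> l u2 * emb \<eta>' l' v1"
  shows "u1 * v2 = u2 * v1"
    and "\<eta> * (u1 ^ q * v2 - u2 ^ q * v1) + (if l' = l then \<eta>' * (u1 * v2 ^ q - u2 * v1 ^ q) else 0) = 0"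
proof -
  define A where "A = u1 * v2 - u2 * v1"
  define B where "B = \<eta> * (u1 ^ q * v2 - u2 ^ q * v1)"
  define C' where "C' = \<eta>' * (u1 * v2 ^ q - u2 * v1 ^ q)"
  define D where "D = \<eta> * \<eta>' * (u1 ^ q * v2 ^ q - u2 ^ q * v1 ^ q)"
  let ?ts = "[(A, 0), (B, l), (C', l'), (D, l + l')]"
  have "(\<Sum>(c, d) \<leftarrow> ?ts. c * \<gamma> ^ d) = emb \<eta> l u1 * emb \<eta>' l' v2 - emb \<eta> l u2 * emb \<eta>' l' v1"
    unfolding A_def B_def C'_def D_def emb_def by (simp add: algebra_simps power_add)
  then have "(\<Sum>(c, d) \<leftarrow> ?ts. c * \<gamma> ^ d) = 0" using cross by simp
  then have "(\<Sum>(c, d) \<leftarrow> ?ts. if d = j then c else 0) = 0" for j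
    using Fk_elems l
    by (intro power_relation_coeff_eq_0) (auto simp: A_def B_def C'_def D_def Fk_closed)
  from this[of 0] this[of l] show "u1 * v2 = u2 * v1" "B + (if l' = l then C' else 0) = 0"
    using l by (simp_all add: A_def)
qed

lemma emb_cross_relation_imp_Fq_ratio:
  assumes \<eta>: "\<eta> \<in> R" "\<eta>' \<in> R" and l: "l \<in> {1..e}" "l' \<in> {1..e}"
    and Fk_elems: "u1 \<in> Fk" "u2 \<in> Fk" "v1 \<in> Fk" "v2 \<in> Fk" and nonzero: "u1 \<noteq> 0" "v1 \<noteq> 0"
    and cross: "emb \<eta> l u1 * emb \<eta>' l' v2 = emb \<eta> l u2 * emb \<eta>' l' v1"
    and not_Fq: "u2 / u1 \<notin> Fq"
  shows "\<eta> = \<eta>' \<and> l = l' \<and> u1 / v1 \<in> Fq"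
proof -
  have "0 < l" "0 < l'" "l + l' < r" using l double_e_less by auto
  note rel = emb_cross_relation[OF Fk_elems R_memD[OF \<eta>(1), THEN conjunct1]
      R_memD[OF \<eta>(2), THEN conjunct1] this cross]
  define t where "t = u2 / u1"
  have t: "u2 = t * u1" "v2 = t * v1"
    using rel(1) nonzero unfolding t_def by (simp_all add: field_simps)
  have "t - t ^ q \<noteq> 0" using not_Fq mem_Fq_iff unfolding t_def by simp
  moreover have "(t - t ^ q) * (\<eta> * u1 ^ q * v1 - (if l' = l then \<eta>' * u1 * v1 ^ q else 0)) = 0"
    using rel(2) unfolding t by (simp add: power_mult_distrib algebra_simps split: if_splits)
  ultimately have \<eta>_eq: "\<eta> * u1 ^ q * v1 = (if l' = l then \<eta>' * u1 * v1 ^ q else 0)" by simp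
  then have "l = l'" using nonzero R_memD \<eta> by (auto split: if_splits)
  define w where "w = u1 / v1"
  have w: "w \<in> Fk - {0}" using Fk_elems nonzero by (simp add: w_def Fk_closed)
  have "\<eta>' = \<eta> * w ^ (q - 1)"
    using \<eta>_eq \<open>l = l'\<close> nonzero R_memD \<eta> unfolding w_def power_q[of u1] power_q[of v1]
    by (simp add: field_simps power_divide)
  moreover from this have "\<eta>' = \<eta>" using R_eq_if_ratio_power \<eta> w by blast
  ultimately have "w \<in> Fq" using R_memD \<eta> w power_q_minus_1_eq_1_iff by auto
  then show ?thesis using \<open>\<eta>' = \<eta>\<close> \<open>l = l'\<close> by (simp add: w_def)
qed

lemma independent_pair_in_V_inter_scaled_V:
  assumes \<eta>: "\<eta> \<in> R" "\<eta>' \<in> R" and l: "l \<in> {1..e}" "l' \<in> {1..e}"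
    and x1: "x1 \<in> V \<eta> l" "x1 \<in> (\<lambda>x. \<alpha> * x) ` V \<eta>' l'"
    and x2: "x2 \<in> V \<eta> l" "x2 \<in> (\<lambda>x. \<alpha> * x) ` V \<eta>' l'"
    and independent: "x1 \<noteq> 0" "x2 \<notin> (\<lambda>c. c * x1) ` Fq"
  shows "\<eta> = \<eta>' \<and> l = l' \<and> \<alpha> \<in> Fq"
proof -
  obtain u1 u2 where u: "u1 \<in> Fk" "u2 \<in> Fk" "x1 = emb \<eta> l u1" "x2 = emb \<eta> l u2"
    using x1(1) x2(1) by (auto simp: V_eq_image_emb)
  obtain v1 v2 where v: "v1 \<in> Fk" "v2 \<in> Fk" "x1 = \<alpha> * emb \<eta>' l' v1" "x2 = \<alpha> * emb \<eta>' l' v2"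
    using x1(2) x2(2) by (auto simp: V_eq_image_emb)
  have nonzero: "u1 \<noteq> 0" "v1 \<noteq> 0" using u v independent emb_0 by auto
  have "emb \<eta> l u1 * emb \<eta>' l' v2 = (\<alpha> * emb \<eta>' l' v1) * emb \<eta>' l' v2" using u v by simp
  also have "\<dots> = (\<alpha> * emb \<eta>' l' v2) * emb \<eta>' l' v1" by (simp add: ac_simps)
  also have "\<dots> = emb \<eta> l u2 * emb \<eta>' l' v1" using u v by simp
  finally have cross: "emb \<eta> l u1 * emb \<eta>' l' v2 = emb \<eta> l u2 * emb \<eta>' l' v1" .
  have "u2 / u1 \<notin> Fq"
  proof
    assume "u2 / u1 \<in> Fq"
    then have "x2 = (u2 / u1) * x1" using emb_smult[of "u2 / u1" \<eta> l u1] u nonzero by simp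
    then show False using independent \<open>u2 / u1 \<in> Fq\<close> by blast
  qed
  with emb_cross_relation_imp_Fq_ratio[OF \<eta> l u(1,2) v(1,2) nonzero cross]
  have same: "\<eta> = \<eta>'" "l = l'" and "u1 / v1 \<in> Fq" by auto
  then have "x1 = (u1 / v1) * emb \<eta>' l' v1" using emb_smult[of "u1 / v1" \<eta>' l' v1] u nonzero by simp
  moreover have "emb \<eta>' l' v1 \<noteq> 0" using v independent by auto
  ultimately have "\<alpha> = u1 / v1" using v(3) by (metis mult_right_cancel)
  then show ?thesis using same \<open>u1 / v1 \<in> Fq\<close> by simp
qed

lemma V_has_independent_pair:
  assumes "\<eta> \<in> R" "l \<in> {1..e}"
  obtains x1 x2 where "x1 \<in> V \<eta> l" "x2 \<in> V \<eta> l" "x1 \<noteq> 0" "x2 \<notin> (\<lambda>c. c * x1) ` Fq"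
proof -
  let ?x1 = "emb \<eta> l 1"
  have "?x1 \<in> V \<eta> l" using Fk_closed(2) by (simp add: V_eq_image_emb)
  moreover have "?x1 \<noteq> 0"
    using emb_eq_0_iff[OF R_memD[OF assms(1), THEN conjunct1] exponent_bounds[OF assms(2)]] Fk_closed(2) by simp
  moreover have "card ((\<lambda>c. c * ?x1) ` Fq) < card (V \<eta> l)"
    using card_image_le[of Fq] Fq(2) card_V[OF assms] q_less by (metis finite le_less_trans)
  then obtain x2 where "x2 \<in> V \<eta> l" "x2 \<notin> (\<lambda>c. c * ?x1) ` Fq"
    by (metis card_mono finite leD subsetI)
  ultimately show ?thesis using that by blast
qed

lemma scaled_V_eq_V_imp:
  assumes "\<eta> \<in> R" "\<eta>' \<in> R" "l \<in> {1..e}" "l' \<in> {1..e}" "(\<lambda>x. \<alpha> * x) ` V \<eta>' l' = V \<eta> l"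
  shows "\<eta> = \<eta>' \<and> l = l' \<and> \<alpha> \<in> Fq"
proof -
  obtain x1 x2 where x: "x1 \<in> V \<eta> l" "x2 \<in> V \<eta> l" "x1 \<noteq> 0" "x2 \<notin> (\<lambda>c. c * x1) ` Fq"
    using V_has_independent_pair assms(1,3) by blast
  show ?thesis
    by (rule independent_pair_in_V_inter_scaled_V[OF assms(1-4)]) (use x assms(5) in auto)
qed

lemma Fq_scaled_V_eq_V:
  assumes "c \<in> Fq" "c \<noteq> 0"
  shows "(\<lambda>x. c * x) ` V \<eta> l = V \<eta> l"
proof -
  have "(\<lambda>x. c * x) ` V \<eta> l = emb \<eta> l ` ((\<lambda>u. c * u) ` Fk)"
    using assms(1) by (simp add: V_eq_image_emb image_image emb_smult)
  also have "(\<lambda>u. c * u) ` Fk = Fk" using assms Fk by (intro image_mult_subfield) auto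
  finally show ?thesis by (simp add: V_eq_image_emb)
qed

lemma scaled_V_eq_iff:
  assumes "\<eta> \<in> R" "\<eta>' \<in> R" "l \<in> {1..e}" "l' \<in> {1..e}" "\<alpha> \<noteq> 0" "\<beta> \<noteq> 0"
  shows "(\<lambda>x. \<alpha> * x) ` V \<eta> l = (\<lambda>x. \<beta> * x) ` V \<eta>' l' \<longleftrightarrow> \<eta> = \<eta>' \<and> l = l' \<and> \<beta> / \<alpha> \<in> Fq"
proof -
  have "(\<lambda>x. \<beta> * x) ` V \<eta>' l' = (\<lambda>x. \<alpha> * x) ` ((\<lambda>x. (\<beta> / \<alpha>) * x) ` V \<eta>' l')"
    using assms(5) by (simp add: image_image mult.assoc[symmetric])
  moreover have "inj (\<lambda>x. \<alpha> * x)" using assms(5) by simp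
  ultimately have "(\<lambda>x. \<alpha> * x) ` V \<eta> l = (\<lambda>x. \<beta> * x) ` V \<eta>' l'
      \<longleftrightarrow> V \<eta> l = (\<lambda>x. (\<beta> / \<alpha>) * x) ` V \<eta>' l'"
    by (simp add: inj_image_eq_iff)
  also have "\<dots> \<longleftrightarrow> \<eta> = \<eta>' \<and> l = l' \<and> \<beta> / \<alpha> \<in> Fq"
  proof
    assume "V \<eta> l = (\<lambda>x. (\<beta> / \<alpha>) * x) ` V \<eta>' l'"
    then show "\<eta> = \<eta>' \<and> l = l' \<and> \<beta> / \<alpha> \<in> Fq"
      using scaled_V_eq_V_imp[OF assms(1-4), of "\<beta> / \<alpha>"] by argo
  next
    assume "\<eta> = \<eta>' \<and> l = l' \<and> \<beta> / \<alpha> \<in> Fq"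
    then show "V \<eta> l = (\<lambda>x. (\<beta> / \<alpha>) * x) ` V \<eta>' l'"
      using Fq_scaled_V_eq_V[of "\<beta> / \<alpha>"] assms(5,6) by simp
  qed
  finally show ?thesis .
qed

lemma mem_C_iff: "U \<in> C \<longleftrightarrow> (\<exists>\<eta> l \<alpha>. \<eta> \<in> R \<and> l \<in> {1..e} \<and> \<alpha> \<noteq> 0 \<and> U = (\<lambda>x. \<alpha> * x) ` V \<eta> l)"
  unfolding C_def by fast

lemma subspace_C: "U \<in> C \<Longrightarrow> is_subspace Fq U"
  using subspace_scale[OF subspace_V] by (auto simp: mem_C_iff)

lemma card_C_member: "U \<in> C \<Longrightarrow> card U = q ^ k"
  using card_V by (auto simp: mem_C_iff card_image inj_on_def)

lemma dim_C_member: "U \<in> C \<Longrightarrow> subspace_dim Fq U = k"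
  using subspace_dim_eqI[OF Fq(1) subspace_C] card_C_member Fq(2) by simp

lemma cyclic_C: "cyclic_code C"
  unfolding cyclic_code_def
proof (intro ballI allI impI)
  fix U and \<alpha> :: 'a assume "U \<in> C" "\<alpha> \<noteq> 0"
  then obtain \<eta> l \<beta> where "\<eta> \<in> R" "l \<in> {1..e}" "\<alpha> * \<beta> \<noteq> 0" "U = (\<lambda>x. \<beta> * x) ` V \<eta> l"
    by (auto simp: mem_C_iff)
  moreover from this have "(\<lambda>x. \<alpha> * x) ` U = (\<lambda>x. (\<alpha> * \<beta>) * x) ` V \<eta> l"
    by (simp add: image_image mult.assoc)
  ultimately show "(\<lambda>x. \<alpha> * x) ` U \<in> C" unfolding mem_C_iff by blast
qed

definition code_params :: "(('a \<times> nat) \<times> 'a) set" where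
  "code_params = (R \<times> {1..e}) \<times> (UNIV - {0})"

definition codeword :: "('a \<times> nat) \<times> 'a \<Rightarrow> 'a set" where
  "codeword = (\<lambda>((\<eta>, l), \<alpha>). (\<lambda>x. \<alpha> * x) ` V \<eta> l)"

lemma C_eq_image_codeword: "C = codeword ` code_params"
  unfolding code_params_def codeword_def mem_C_iff set_eq_iff by force

lemma card_code_params: "card code_params = (q - 1) * (e * (q ^ n - 1))"
  unfolding code_params_def using ambient card_R by (simp add: card_cartesian_product)

lemma card_codeword_fibre:
  assumes "b \<in> code_params"
  shows "card {b' \<in> code_params. codeword b' = codeword b} = q - 1"
proof -
  obtain \<eta> l \<alpha> where "b = ((\<eta>, l), \<alpha>)" by (metis prod.collapse)
  with assms have b: "b = ((\<eta>, l), \<alpha>)" "\<eta> \<in> R" "l \<in> {1..e}" "\<alpha> \<noteq> 0"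
    by (auto simp: code_params_def)
  have "{b' \<in> code_params. codeword b' = codeword b} = (\<lambda>c. ((\<eta>, l), c * \<alpha>)) ` (Fq - {0})"
  proof (intro equalityI subsetI)
    fix b' assume "b' \<in> {b' \<in> code_params. codeword b' = codeword b}"
    moreover obtain \<eta>' l' \<beta> where "b' = ((\<eta>', l'), \<beta>)" by (metis prod.collapse)
    ultimately have b': "b' = ((\<eta>', l'), \<beta>)" "\<eta>' \<in> R" "l' \<in> {1..e}" "\<beta> \<noteq> 0"
        "(\<lambda>x. \<alpha> * x) ` V \<eta> l = (\<lambda>x. \<beta> * x) ` V \<eta>' l'"
      unfolding code_params_def codeword_def b by auto
    then have "\<eta>' = \<eta>" "l' = l" "\<beta> / \<alpha> \<in> Fq - {0}" "\<beta> = (\<beta> / \<alpha>) * \<alpha>"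
      using scaled_V_eq_iff[OF b(2) b'(2) b(3) b'(3) b(4) b'(4)] b(4) by auto
    then show "b' \<in> (\<lambda>c. ((\<eta>, l), c * \<alpha>)) ` (Fq - {0})" using b'(1) by blast
  next
    fix b' assume "b' \<in> (\<lambda>c. ((\<eta>, l), c * \<alpha>)) ` (Fq - {0})"
    then obtain c where c: "c \<in> Fq" "c \<noteq> 0" "b' = ((\<eta>, l), c * \<alpha>)" by blast
    then have "codeword b' = codeword b"
      using scaled_V_eq_iff[OF b(2) b(2) b(3) b(3) b(4), of "c * \<alpha>"] b by (simp add: codeword_def)
    then show "b' \<in> {b' \<in> code_params. codeword b' = codeword b}"
      using b c unfolding code_params_def by simp
  qed
  moreover have "inj_on (\<lambda>c. ((\<eta>, l), c * \<alpha>)) (Fq - {0})" using b(4) by (auto intro: inj_onI)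
  ultimately show ?thesis using Fq subfield_0[OF Fq(1)] by (simp add: card_image)
qed

lemma card_C: "card C = e * (q ^ n - 1)"
proof -
  have "finite code_params" by (simp add: code_params_def)
  then have "card code_params = card C * (q - 1)"
    unfolding C_eq_image_codeword by (rule card_eq_card_image_mult_fibre) (rule card_codeword_fibre)
  then show ?thesis using card_code_params q_ge_2 by simp
qed

lemma independent_pair_in_inter_C:
  assumes U: "U \<in> C" and W: "W \<in> C" and x: "x1 \<in> U \<inter> W" "x2 \<in> U \<inter> W"
    and independent: "x1 \<noteq> 0" "x2 \<notin> (\<lambda>c. c * x1) ` Fq"
  shows "U = W"
proof -
  obtain \<eta> l \<alpha> where U': "\<eta> \<in> R" "l \<in> {1..e}" "\<alpha> \<noteq> 0" "U = (\<lambda>x. \<alpha> * x) ` V \<eta> l"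
    using U by (auto simp: mem_C_iff)
  obtain \<eta>' l' \<beta> where W': "\<eta>' \<in> R" "l' \<in> {1..e}" "\<beta> \<noteq> 0" "W = (\<lambda>x. \<beta> * x) ` V \<eta>' l'"
    using W by (auto simp: mem_C_iff)
  have "x / \<alpha> \<in> V \<eta> l \<inter> (\<lambda>x. (\<beta> / \<alpha>) * x) ` V \<eta>' l'" if x: "x \<in> U \<inter> W" for x
  proof -
    obtain a b where "a \<in> V \<eta> l" "x = \<alpha> * a" "b \<in> V \<eta>' l'" "x = \<beta> * b"
      using x U' W' by blast
    moreover from this have "x / \<alpha> = a" "x / \<alpha> = (\<beta> / \<alpha>) * b" using U'(3) by simp_all
    ultimately show ?thesis by (metis IntI image_eqI)
  qed
  moreover have "x1 / \<alpha> \<noteq> 0" "x2 / \<alpha> \<notin> (\<lambda>c. c * (x1 / \<alpha>)) ` Fq"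
    using independent U'(3) by (auto simp: image_iff)
  ultimately have "\<eta> = \<eta>' \<and> l = l' \<and> \<beta> / \<alpha> \<in> Fq"
    using independent_pair_in_V_inter_scaled_V[OF U'(1) W'(1) U'(2) W'(2)] x by blast
  then show ?thesis using scaled_V_eq_iff[OF U'(1) W'(1) U'(2) W'(2) U'(3) W'(3)] U'(4) W'(4) by simp
qed

lemma inter_C_eq_line:
  assumes "U \<in> C" "W \<in> C" "U \<noteq> W" "x \<in> U \<inter> W" "x \<noteq> 0"
  shows "U \<inter> W = (\<lambda>c. c * x) ` Fq"
proof
  show "U \<inter> W \<subseteq> (\<lambda>c. c * x) ` Fq"
    using independent_pair_in_inter_C[of U W x] assms by blast
  show "(\<lambda>c. c * x) ` Fq \<subseteq> U \<inter> W"
    using subspace_Int[OF subspace_C subspace_C, of U W] assms(1,2,4) by (auto simp: is_subspace_def)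
qed

lemma subspace_dist_C:
  assumes "U \<in> C" "W \<in> C" "U \<noteq> W"
  shows "subspace_dist Fq U W = (if U \<inter> W = {0} then 2 * k else 2 * k - 2)"
proof -
  have subspace: "is_subspace Fq (U \<inter> W)" using subspace_Int subspace_C assms(1,2) by blast
  have "subspace_dim Fq (U \<inter> W) = (if U \<inter> W = {0} then 0 else 1)"
  proof (cases "U \<inter> W = {0}")
    case True
    then show ?thesis using subspace_dim_eqI[OF Fq(1) subspace, of 0] by simp
  next
    case False
    then obtain x where x: "x \<in> U \<inter> W" "x \<noteq> 0"
      using subspace by (auto simp: is_subspace_def)
    have "card (U \<inter> W) = card Fq ^ 1"
      using inter_C_eq_line[OF assms x] x(2) by (simp add: card_image inj_on_def)
    then show ?thesis using subspace_dim_eqI[OF Fq(1) subspace] False by simp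
  qed
  then show ?thesis
    using dim_C_member[OF assms(1)] dim_C_member[OF assms(2)] unfolding subspace_dist_def
    by (cases "U \<inter> W = {0}") simp_all
qed

lemma C_has_intersecting_pair: "\<exists>U \<in> C. \<exists>W \<in> C. U \<noteq> W \<and> U \<inter> W \<noteq> {0}"
proof -
  obtain \<eta> where \<eta>: "\<eta> \<in> R" using R_transversal[rule_format, of 1] Fk_closed(2) by auto
  have l: "1 \<in> {1..e}" using e_ge_1 by simp
  have "\<not> Fk \<subseteq> Fq"
    using card_mono[of Fq Fk] Fq(2) Fk(3) q_less by auto
  then obtain u where u: "u \<in> Fk" "u \<notin> Fq" by auto
  have inj: "inj_on (emb \<eta> 1) Fk" using R_memD[OF \<eta>] exponent_bounds[OF l] by (intro inj_on_emb) auto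
  define x where "x = emb \<eta> 1 u"
  define y where "y = emb \<eta> 1 1"
  have "x \<noteq> 0" "y \<noteq> 0"
    unfolding x_def y_def using emb_eq_0_iff[OF R_memD[OF \<eta>, THEN conjunct1] exponent_bounds[OF l]] u
      Fk_closed(2) subfield_0[OF Fq(1)] by auto
  define \<alpha> where "\<alpha> = x / y"
  have \<alpha>: "\<alpha> \<noteq> 0" "x = \<alpha> * y" unfolding \<alpha>_def using \<open>x \<noteq> 0\<close> \<open>y \<noteq> 0\<close> by simp_all
  let ?U = "(\<lambda>z. 1 * z) ` V \<eta> 1" and ?W = "(\<lambda>z. \<alpha> * z) ` V \<eta> 1"
  have "?U \<in> C" "?W \<in> C" unfolding mem_C_iff using \<eta> l \<alpha>(1) one_neq_zero by blast+
  moreover have "x \<in> V \<eta> 1" "y \<in> V \<eta> 1"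
    using u Fk_closed(2) unfolding x_def y_def V_eq_image_emb by blast+
  then have "x \<in> ?U \<inter> ?W" using \<alpha>(2) by auto
  moreover have "?U \<noteq> ?W"
  proof
    assume "?U = ?W"
    then have "\<alpha> \<in> Fq" using scaled_V_eq_iff[OF \<eta> \<eta> l l one_neq_zero \<alpha>(1)] by simp
    then have "emb \<eta> 1 u = emb \<eta> 1 \<alpha>" using \<alpha>(2) by (simp add: x_def y_def flip: emb_smult)
    then have "u = \<alpha>" using inj_onD[OF inj] u \<open>\<alpha> \<in> Fq\<close> Fk(2) by blast
    then show False using u \<open>\<alpha> \<in> Fq\<close> by simp
  qed
  ultimately show ?thesis using \<open>x \<noteq> 0\<close> by blast
qed

lemma min_distance_C: "min_distance Fq C = 2 * k - 2"
  unfolding min_distance_def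
proof (rule Min_eqI)
  let ?D = "{subspace_dist Fq U W | U W. U \<in> C \<and> W \<in> C \<and> U \<noteq> W}"
  have "?D \<subseteq> (\<lambda>(U, W). subspace_dist Fq U W) ` (C \<times> C)" by auto
  then show "finite ?D" by (rule finite_subset) simp
  show "2 * k - 2 \<le> d" if d: "d \<in> ?D" for d
  proof -
    obtain U W where "U \<in> C" "W \<in> C" "U \<noteq> W" "d = subspace_dist Fq U W" using d by blast
    then show ?thesis using subspace_dist_C[of U W] by simp
  qed
  obtain U W where "U \<in> C" "W \<in> C" "U \<noteq> W" "U \<inter> W \<noteq> {0}"
    using C_has_intersecting_pair by blast
  moreover from this have "subspace_dist Fq U W = 2 * k - 2" using subspace_dist_C by simp
  ultimately show "2 * k - 2 \<in> ?D" by (metis (mono_tags, lifting) mem_Collect_eq)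
qed

end

theorem lemma3p3:
  fixes Fq Fk :: "'a::{field,finite} set"
    and q k r n e :: nat
    and \<xi> \<gamma> :: 'a
    and p :: "'a poly"
    and R :: "'a set"
    and V :: "'a \<Rightarrow> nat \<Rightarrow> 'a set"
    and C :: "'a set set"
  assumes Fq: "is_subfield Fq" "card Fq = q"
    and Fk: "is_subfield Fk" "Fq \<subseteq> Fk" "card Fk = q ^ k"
    and ambient: "card (UNIV :: 'a set) = q ^ n"
    and k: "k \<ge> 2" and r: "r > 2" and n: "n = r * k"
    and e: "e = nat \<lceil>real r / 2\<rceil> - 1"
    and xi: "\<xi> \<in> Fk" "\<forall>x\<in>Fk - {0}. \<exists>j::nat. x = \<xi> ^ j"
    and gamma: "irreducible_over Fk p" "degree p = r" "poly p \<gamma> = 0"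
    and R: "R \<subseteq> Fk - {0}"
      "\<forall>x\<in>Fk - {0}. \<exists>!\<eta>. \<eta> \<in> R \<and> x * inverse \<eta> \<in> {\<xi> ^ ((q - 1) * j) | j. True}"
    and V_def: "\<And>\<eta> l. V \<eta> l = {u + \<eta> * u ^ q * \<gamma> ^ l | u. u \<in> Fk}"
    and C_def: "C = (\<Union>(\<eta>, l) \<in> R \<times> {1..e}. {(\<lambda>x. \<alpha> * x) ` V \<eta> l | \<alpha>. \<alpha> \<noteq> 0})"
  shows "(\<forall>U\<in>C. is_subspace Fq U \<and> subspace_dim Fq U = k)
     \<and> cyclic_code C
     \<and> card C = e * (q ^ n - 1)
     \<and> min_distance Fq C = 2 * k - 2"
proof -
  interpret orbit_code Fq Fk q k r n e \<xi> \<gamma> p R V C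
    using Fq Fk ambient k r e xi gamma R V_def C_def by unfold_locales
  show ?thesis using subspace_C dim_C_member cyclic_C card_C min_distance_C by blast
qed

end
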